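(* Let $H$ be an admissible Hamiltonian with Hessian $\mathcal H$, and let $q_0,\dots,q_{n-1}$ be the functions defined by $q_\ell(x)=\frac1{2n}\operatorname{tr}\big((A^T)^\ell(J(x)\mathcal H)^2\big)$ (so that $(J(x)\mathcal H)^2=\sum_{\ell=0}^{n-1}q_\ell(x)A^\ell$). Then $\nabla q_\ell(x)=A^\ell\nabla q_0(x)$, equivalently $\nabla q_\ell=A\nabla q_{\ell-1}$, for $\ell=1,\dots,n-1$.
   Context: Fix an integer $n\ge 2$. Points of $\mathbb R^{2n}$ are $x=(x_1,\dots,x_{2n})^{T}$; write $u=(x_1,\dots,x_n)^T$. Let $X(u)$ be the $n\times n$ matrix with entries $X(u)_{ij}=x_{k}$ where $k\in\{1,\dots,n\}$, $k\equiv i+j-1 \pmod n$, and let $J(x)=\begin{pmatrix}0&X(u)\\-X(u)&0\end{pmatrix}$. Let $\mathcal P$ be the $n\times n$ cyclic shift matrix ($\mathcal P_{i,i+1}=1$ for $1\le i\le n-1$, $\mathcal P_{n,1}=1$, all other entries $0$) and $A=\begin{pmatrix}\mathcal P&0\\0&\mathcal P\end{pmatrix}$. An admissible Hamiltonian is a homogeneous quadratic form $H(x)=\tfrac12 x^T\mathcal H x$ with a constant symmetric matrix $\mathcal H=\nabla^2H$ satisfying $A\mathcal H=\mathcal H A^T$. *)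

theory Defs
  imports "HOL-Analysis.Derivative" "Jordan_Normal_Form.Matrix"
begin

text \<open>Indices are 0-based: entry (i,j) for i,j < dim. Vectors x of R^(2n) are real vecs of dim 2n.\<close>

text \<open>X(u)_{ij} = x_k with k = i+j-1 mod n (1-based), i.e. x_((i+j) mod n) 0-based.\<close>
definition Xmat :: "nat \<Rightarrow> real vec \<Rightarrow> real mat" where
  "Xmat n x = mat n n (\<lambda>(i,j). x $ ((i + j) mod n))"

definition Jmat :: "nat \<Rightarrow> real vec \<Rightarrow> real mat" where
  "Jmat n x = four_block_mat (0\<^sub>m n n) (Xmat n x) (- Xmat n x) (0\<^sub>m n n)"

definition Pshift :: "nat \<Rightarrow> real mat" where
  "Pshift n = mat n n (\<lambda>(i,j). if j = (i + 1) mod n then 1 else 0)"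

definition Amat :: "nat \<Rightarrow> real mat" where
  "Amat n = four_block_mat (Pshift n) (0\<^sub>m n n) (0\<^sub>m n n) (Pshift n)"

definition admissible_hessian :: "nat \<Rightarrow> real mat \<Rightarrow> bool" where
  "admissible_hessian n Hs \<longleftrightarrow> Hs \<in> carrier_mat (2*n) (2*n) \<and> transpose_mat Hs = Hs
     \<and> Amat n * Hs = Hs * transpose_mat (Amat n)"

definition mtrace :: "real mat \<Rightarrow> real" where
  "mtrace M = (\<Sum>i<dim_row M. M $$ (i,i))"

definition qfun :: "nat \<Rightarrow> real mat \<Rightarrow> nat \<Rightarrow> real vec \<Rightarrow> real" where
  "qfun n Hs l x = (1 / (2 * real n)) *
     mtrace ((transpose_mat (Amat n) ^\<^sub>m l) * ((Jmat n x * Hs) ^\<^sub>m 2))"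

definition grad :: "nat \<Rightarrow> (real vec \<Rightarrow> real) \<Rightarrow> real vec \<Rightarrow> real vec" where
  "grad m f x = vec m (\<lambda>k. deriv (\<lambda>t. f (x + t \<cdot>\<^sub>v unit_vec m k)) 0)"

end

theory Submission
  imports Defs
begin

text \<open>Let \<open>B = A\<^sup>T\<close>, \<open>M = J(x) \<H>\<close> and \<open>K\<^sub>k = J(e\<^sub>k) \<H>\<close>. Since \<open>X(u)\<close> is a circulant,
  \<open>B J(y) = J(y) A\<close> for all \<open>y\<close>, and \<open>B J(e\<^sub>k) = J(e\<^bsub>\<sigma> k\<^esub>)\<close> for the index permutation \<open>\<sigma>\<close> of \<open>A\<close>.
  The first identity and \<open>A \<H> = \<H> B\<close> make \<open>B\<close> commute with \<open>M\<close>. As \<open>J\<close> is linear,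
  \<open>\<partial>\<^sub>k q\<^sub>l(x) = tr(B\<^sup>l (M K\<^sub>k + K\<^sub>k M)) / 2n\<close>, which by this commutation and the cyclicity of the
  trace equals \<open>tr(B\<^sup>l K\<^sub>k M) / n\<close>. Absorbing one factor \<open>B\<close> into \<open>K\<^sub>k\<close> replaces \<open>k\<close> by \<open>\<sigma> k\<close>,
  i.e. \<open>\<partial>\<^sub>k q\<^bsub>l+1\<^esub> = \<partial>\<^bsub>\<sigma> k\<^esub> q\<^sub>l = (A \<nabla>q\<^sub>l)\<^sub>k\<close>.\<close>

lemma mtrace_mult_add:
  assumes "P \<in> carrier_mat N N" "X \<in> carrier_mat N N" "Y \<in> carrier_mat N N"
  shows "mtrace (P * (X + Y)) = mtrace (P * X) + mtrace (P * Y)"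
  using assms by (simp add: mult_add_distrib_mat[of _ N N] mtrace_def sum.distrib)

lemma mtrace_mult_smult:
  assumes "P \<in> carrier_mat N N" "X \<in> carrier_mat N N"
  shows "mtrace (P * (t \<cdot>\<^sub>m X)) = t * mtrace (P * X)"
  using assms by (simp add: mult_smult_distrib[of _ N N] mtrace_def sum_distrib_left)

lemma mtrace_mult_commute:
  assumes "P \<in> carrier_mat N L" "Q \<in> carrier_mat L N"
  shows "mtrace (P * Q) = mtrace (Q * P)"
proof -
  have "mtrace (P * Q) = (\<Sum>i<N. \<Sum>m<L. P $$ (i,m) * Q $$ (m,i))"
    using assms by (simp add: mtrace_def scalar_prod_def lessThan_atLeast0)
  also have "\<dots> = (\<Sum>m<L. \<Sum>i<N. Q $$ (m,i) * P $$ (i,m))"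
    by (subst sum.swap) (simp add: mult.commute)
  also have "\<dots> = mtrace (Q * P)"
    using assms by (simp add: mtrace_def scalar_prod_def lessThan_atLeast0)
  finally show ?thesis .
qed

lemma mtrace_mult_anticommutator:
  assumes P: "P \<in> carrier_mat N N" and M: "M \<in> carrier_mat N N" and K: "K \<in> carrier_mat N N"
    and PM: "P * M = M * P"
  shows "mtrace (P * (M * K + K * M)) = 2 * mtrace (P * (K * M))"
proof -
  have "mtrace (P * (M * K)) = mtrace (M * (P * K))"
    using P M K by (simp flip: assoc_mult_mat add: PM)
  also have "\<dots> = mtrace (P * (K * M))"
    using P M K by (subst mtrace_mult_commute[of _ N N]) auto
  finally have "mtrace (P * (M * K)) = mtrace (P * (K * M))" .
  then show ?thesis
    using P M K by (simp add: mtrace_mult_add[of _ N])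
qed

lemma pow_mat_commute:
  assumes B: "B \<in> carrier_mat N N" and M: "M \<in> carrier_mat N N" and BM: "B * M = M * B"
  shows "B ^\<^sub>m l * M = M * B ^\<^sub>m l"
proof (induction l)
  case 0
  then show ?case using B M by simp
next
  case (Suc l)
  have Bl: "B ^\<^sub>m l \<in> carrier_mat N N" using B by simp
  have "B ^\<^sub>m Suc l * M = B ^\<^sub>m l * (B * M)"
    using assoc_mult_mat[OF Bl B M] by simp
  also have "\<dots> = (B ^\<^sub>m l * M) * B"
    using assoc_mult_mat[OF Bl M B] by (simp add: BM)
  also have "\<dots> = M * B ^\<^sub>m Suc l"
    using assoc_mult_mat[OF M Bl B] by (simp add: Suc)
  finally show ?case .
qed

lemma mtrace_square_line:
  fixes P M K :: "real mat"
  assumes P: "P \<in> carrier_mat N N" and M: "M \<in> carrier_mat N N" and K: "K \<in> carrier_mat N N"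
  shows "mtrace (P * (M + t \<cdot>\<^sub>m K) ^\<^sub>m 2)
    = mtrace (P * (M * M)) + t * mtrace (P * (M * K + K * M)) + t\<^sup>2 * mtrace (P * (K * K))"
proof -
  have "(M + t \<cdot>\<^sub>m K) ^\<^sub>m 2 = M * M + t \<cdot>\<^sub>m (M * K + K * M) + t\<^sup>2 \<cdot>\<^sub>m (K * K)"
    using M K by (intro eq_matI)
      (auto simp: numeral_2_eq_2 scalar_prod_def power2_eq_square sum_distrib_left
        sum.distrib[symmetric] algebra_simps intro!: sum.cong)
  then show ?thesis
    using P M K
    by (simp add: mtrace_mult_add[of _ N] mtrace_mult_smult[of _ N])
qed

lemma has_derivative_mtrace_square_line:
  fixes P M K :: "real mat"
  assumes "P \<in> carrier_mat N N" "M \<in> carrier_mat N N" "K \<in> carrier_mat N N"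
  shows "((\<lambda>t. mtrace (P * (M + t \<cdot>\<^sub>m K) ^\<^sub>m 2)) has_real_derivative mtrace (P * (M * K + K * M))) (at 0)"
  unfolding mtrace_square_line[OF assms] by (auto intro!: derivative_eq_intros)

text \<open>The index permutation of \<open>Amat n\<close>: the cyclic successor inside each of the blocks
  \<open>{0..<n}\<close> and \<open>{n..<2n}\<close>.\<close>
definition cyc_next :: "nat \<Rightarrow> nat \<Rightarrow> nat" where
  "cyc_next n i = (if i + 1 = n then 0 else if i + 1 = 2*n then n else i + 1)"

definition cyc_prev :: "nat \<Rightarrow> nat \<Rightarrow> nat" where
  "cyc_prev n i = (if i = 0 then n - 1 else if i = n then 2*n - 1 else i - 1)"

lemma mod_Suc_eq_cyc_next_iff:
  assumes "n \<ge> 1" "k < 2*n"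
  shows "Suc s mod n = cyc_next n k \<longleftrightarrow> s mod n = k"
proof -
  define m where "m = s mod n"
  have "m < n" using assms(1) by (simp add: m_def)
  then show ?thesis using assms unfolding cyc_next_def mod_Suc m_def[symmetric] by auto
qed

lemma Suc_mod_cancel:
  assumes "Suc a mod n = Suc b mod n"
  shows "a mod n = b mod n"
proof (cases "n = 0")
  case True
  with assms show ?thesis by simp
next
  case False
  have "a mod n = (Suc a + (n - 1)) mod n"
    using False by simp
  also have "\<dots> = (Suc b + (n - 1)) mod n"
    using assms by (metis mod_add_left_eq)
  also have "\<dots> = b mod n"
    using False by simp
  finally show ?thesis .
qed

lemma cyc_next_less: "n \<ge> 1 \<Longrightarrow> i < 2*n \<Longrightarrow> cyc_next n i < 2*n"
  unfolding cyc_next_def by auto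

lemma cyc_prev_less: "n \<ge> 1 \<Longrightarrow> i < 2*n \<Longrightarrow> cyc_prev n i < 2*n"
  unfolding cyc_prev_def by auto

lemma cyc_prev_less_iff: "n \<ge> 1 \<Longrightarrow> i < 2*n \<Longrightarrow> cyc_prev n i < n \<longleftrightarrow> i < n"
  unfolding cyc_prev_def by auto

lemma cyc_next_eq_iff:
  "n \<ge> 1 \<Longrightarrow> i < 2*n \<Longrightarrow> j < 2*n \<Longrightarrow> j = cyc_next n i \<longleftrightarrow> i = cyc_prev n j"
  unfolding cyc_next_def cyc_prev_def by auto

lemma Suc_cyc_prev_mod: "n \<ge> 1 \<Longrightarrow> i < 2*n \<Longrightarrow> Suc (cyc_prev n i + j) mod n = (i + j) mod n"
proof -
  assume "n \<ge> 1" "i < 2*n"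
  then have "Suc (cyc_prev n i + j) = i + j + n \<or> Suc (cyc_prev n i + j) = i + j"
    unfolding cyc_prev_def by auto
  then show ?thesis by (metis mod_add_self2)
qed

lemma Pshift_carrier: "Pshift n \<in> carrier_mat n n"
  unfolding Pshift_def by auto

lemma Amat_carrier: "Amat n \<in> carrier_mat (2*n) (2*n)"
  unfolding Amat_def using Pshift_carrier[of n] by (simp add: mult_2)

lemma Xmat_carrier: "Xmat n x \<in> carrier_mat n n"
  unfolding Xmat_def by auto

lemma Jmat_carrier: "Jmat n x \<in> carrier_mat (2*n) (2*n)"
  unfolding Jmat_def using Xmat_carrier[of n x] by (simp add: mult_2)

lemma dim_Amat [simp]: "dim_row (Amat n) = 2*n" "dim_col (Amat n) = 2*n"
  using Amat_carrier[of n] by auto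

lemma dim_Jmat [simp]: "dim_row (Jmat n x) = 2*n" "dim_col (Jmat n x) = 2*n"
  using Jmat_carrier[of n x] by auto

lemma Amat_index:
  assumes "n \<ge> 1" "i < 2*n" "j < 2*n"
  shows "Amat n $$ (i,j) = (if j = cyc_next n i then 1 else 0)"
proof -
  have "Amat n $$ (i,j) = (if i < n then if j < n then Pshift n $$ (i,j) else 0
      else if j < n then 0 else Pshift n $$ (i - n, j - n))"
    unfolding Amat_def using assms Pshift_carrier[of n] by (subst index_mat_four_block) auto
  then show ?thesis
    using assms by (auto simp: Pshift_def cyc_next_def mod_Suc)
qed

lemma Jmat_index:
  assumes "i < 2*n" "j < 2*n"
  shows "Jmat n x $$ (i,j) = (if i < n \<and> n \<le> j then x $ ((i + j) mod n)
      else if n \<le> i \<and> j < n then - x $ ((i + j) mod n) else 0)"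
proof -
  have "Jmat n x $$ (i,j) = (if i < n then if j < n then 0 else Xmat n x $$ (i, j - n)
      else if j < n then - Xmat n x $$ (i - n, j) else 0)"
    unfolding Jmat_def using assms Xmat_carrier[of n x] by (subst index_mat_four_block) auto
  moreover have "(i + (j - n)) mod n = (i + j) mod n" if "n \<le> j"
    using mod_add_self2[of "i + (j - n)" n] that by simp
  moreover have "(i - n + j) mod n = (i + j) mod n" if "n \<le> i"
    using mod_add_self2[of "i - n + j" n] that by simp
  ultimately show ?thesis
    using assms by (auto simp: Xmat_def)
qed

lemma Amat_mult_vec_index:
  assumes "n \<ge> 1" "g \<in> carrier_vec (2*n)" "k < 2*n"
  shows "(Amat n *\<^sub>v g) $ k = g $ cyc_next n k"
proof -
  have "(Amat n *\<^sub>v g) $ k = (\<Sum>j\<in>{0..<2*n}. (if j = cyc_next n k then 1 else 0) * g $ j)"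
    using assms Amat_carrier[of n] by (auto simp: scalar_prod_def Amat_index intro!: sum.cong)
  also have "\<dots> = g $ cyc_next n k"
    using cyc_next_less[OF assms(1,3)] by (simp add: if_distrib[of "\<lambda>c. c * _"] cong: if_cong)
  finally show ?thesis .
qed

lemma transpose_Amat_mult_index:
  assumes "n \<ge> 1" "Y \<in> carrier_mat (2*n) m" "i < 2*n" "j < m"
  shows "(transpose_mat (Amat n) * Y) $$ (i,j) = Y $$ (cyc_prev n i, j)"
proof -
  have "(transpose_mat (Amat n) * Y) $$ (i,j)
      = (\<Sum>k\<in>{0..<2*n}. (if k = cyc_prev n i then 1 else 0) * Y $$ (k,j))"
    using assms Amat_carrier[of n]
    by (auto simp: scalar_prod_def Amat_index cyc_next_eq_iff intro!: sum.cong)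
  also have "\<dots> = Y $$ (cyc_prev n i, j)"
    using cyc_prev_less[OF assms(1,3)] by (simp add: if_distrib[of "\<lambda>c. c * _"] cong: if_cong)
  finally show ?thesis .
qed

lemma mult_Amat_index:
  assumes "n \<ge> 1" "Y \<in> carrier_mat m (2*n)" "i < m" "j < 2*n"
  shows "(Y * Amat n) $$ (i,j) = Y $$ (i, cyc_prev n j)"
proof -
  have "(Y * Amat n) $$ (i,j) = (\<Sum>k\<in>{0..<2*n}. (if k = cyc_prev n j then 1 else 0) * Y $$ (i,k))"
    using assms Amat_carrier[of n]
    by (auto simp: scalar_prod_def Amat_index cyc_next_eq_iff mult.commute intro!: sum.cong)
  also have "\<dots> = Y $$ (i, cyc_prev n j)"
    using cyc_prev_less[OF assms(1,4)] by (simp add: if_distrib[of "\<lambda>c. c * _"] cong: if_cong)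
  finally show ?thesis .
qed

lemma transpose_Amat_mult_Jmat:
  assumes "n \<ge> 1"
  shows "transpose_mat (Amat n) * Jmat n x = Jmat n x * Amat n"
proof (rule eq_matI)
  fix i j assume "i < dim_row (Jmat n x * Amat n)" "j < dim_col (Jmat n x * Amat n)"
  then have i: "i < 2*n" and j: "j < 2*n"
    by auto
  have "Suc (cyc_prev n i + j) mod n = Suc (cyc_prev n j + i) mod n"
    unfolding Suc_cyc_prev_mod[OF assms i] Suc_cyc_prev_mod[OF assms j] by (metis add.commute)
  then have "(cyc_prev n i + j) mod n = (i + cyc_prev n j) mod n"
    by (metis Suc_mod_cancel add.commute)
  then show "(transpose_mat (Amat n) * Jmat n x) $$ (i, j) = (Jmat n x * Amat n) $$ (i, j)"
    unfolding transpose_Amat_mult_index[OF assms Jmat_carrier i j] mult_Amat_index[OF assms Jmat_carrier i j]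
    using i j cyc_prev_less[OF assms i] cyc_prev_less[OF assms j]
      cyc_prev_less_iff[OF assms i] cyc_prev_less_iff[OF assms j]
    by (simp add: Jmat_index not_less[symmetric])
qed auto

lemma transpose_Amat_mult_Jmat_unit_vec:
  assumes "n \<ge> 1" "k < 2*n"
  shows "transpose_mat (Amat n) * Jmat n (unit_vec (2*n) k) = Jmat n (unit_vec (2*n) (cyc_next n k))"
proof (rule eq_matI)
  fix i j assume "i < dim_row (Jmat n (unit_vec (2*n) (cyc_next n k)))"
    "j < dim_col (Jmat n (unit_vec (2*n) (cyc_next n k)))"
  then have i: "i < 2*n" and j: "j < 2*n"
    by auto
  have mod_less: "p mod n < 2*n" for p
    using assms(1) mod_less_divisor[of n p] by linarith
  have "(cyc_prev n i + j) mod n = k \<longleftrightarrow> (i + j) mod n = cyc_next n k"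
    using mod_Suc_eq_cyc_next_iff[OF assms, of "cyc_prev n i + j"] Suc_cyc_prev_mod[OF assms(1) i, of j]
    by simp
  then show "(transpose_mat (Amat n) * Jmat n (unit_vec (2*n) k)) $$ (i, j)
      = Jmat n (unit_vec (2*n) (cyc_next n k)) $$ (i, j)"
    unfolding transpose_Amat_mult_index[OF assms(1) Jmat_carrier i j]
    using i j cyc_prev_less[OF assms(1) i] cyc_prev_less_iff[OF assms(1) i]
      cyc_next_less[OF assms] assms(2) mod_less
    by (simp add: Jmat_index not_less[symmetric])
qed auto

lemma Jmat_add_smult:
  assumes "x \<in> carrier_vec (2*n)" "e \<in> carrier_vec (2*n)"
  shows "Jmat n (x + t \<cdot>\<^sub>v e) = Jmat n x + t \<cdot>\<^sub>m Jmat n e"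
proof (rule eq_matI)
  fix i j assume "i < dim_row (Jmat n x + t \<cdot>\<^sub>m Jmat n e)" "j < dim_col (Jmat n x + t \<cdot>\<^sub>m Jmat n e)"
  then have i: "i < 2*n" and j: "j < 2*n"
    by auto
  have "(i + j) mod n < 2*n"
    using i mod_less_divisor[of n "i + j"] by linarith
  then show "Jmat n (x + t \<cdot>\<^sub>v e) $$ (i, j) = (Jmat n x + t \<cdot>\<^sub>m Jmat n e) $$ (i, j)"
    using assms i j Jmat_carrier[of n x] Jmat_carrier[of n e] by (simp add: Jmat_index)
qed auto

lemma admissible_transpose_Amat_commute:
  assumes "n \<ge> 1" "admissible_hessian n Hs"
  shows "transpose_mat (Amat n) * (Jmat n x * Hs) = (Jmat n x * Hs) * transpose_mat (Amat n)"
proof -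
  have A: "Amat n \<in> carrier_mat (2*n) (2*n)" and B: "transpose_mat (Amat n) \<in> carrier_mat (2*n) (2*n)"
    and H: "Hs \<in> carrier_mat (2*n) (2*n)" and AH: "Amat n * Hs = Hs * transpose_mat (Amat n)"
    using assms(2) Amat_carrier[of n] unfolding admissible_hessian_def by auto
  have J: "Jmat n x \<in> carrier_mat (2*n) (2*n)" by (rule Jmat_carrier)
  have "transpose_mat (Amat n) * (Jmat n x * Hs) = (transpose_mat (Amat n) * Jmat n x) * Hs"
    by (rule assoc_mult_mat[OF B J H, symmetric])
  also have "\<dots> = (Jmat n x * Amat n) * Hs"
    by (simp only: transpose_Amat_mult_Jmat[OF assms(1)])
  also have "\<dots> = Jmat n x * (Hs * transpose_mat (Amat n))"
    by (simp only: assoc_mult_mat[OF J A H] AH)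
  also have "\<dots> = (Jmat n x * Hs) * transpose_mat (Amat n)"
    by (rule assoc_mult_mat[OF J H B, symmetric])
  finally show ?thesis .
qed

lemma qfun_line:
  assumes "Hs \<in> carrier_mat (2*n) (2*n)" "x \<in> carrier_vec (2*n)" "e \<in> carrier_vec (2*n)"
  shows "qfun n Hs l (x + t \<cdot>\<^sub>v e) = 1 / (2 * real n) *
    mtrace (transpose_mat (Amat n) ^\<^sub>m l * (Jmat n x * Hs + t \<cdot>\<^sub>m (Jmat n e * Hs)) ^\<^sub>m 2)"
proof -
  have J: "Jmat n x \<in> carrier_mat (2*n) (2*n)" "Jmat n e \<in> carrier_mat (2*n) (2*n)"
    by (rule Jmat_carrier)+
  have "Jmat n (x + t \<cdot>\<^sub>v e) * Hs = (Jmat n x + t \<cdot>\<^sub>m Jmat n e) * Hs"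
    by (simp only: Jmat_add_smult[OF assms(2,3)])
  also have "\<dots> = Jmat n x * Hs + (t \<cdot>\<^sub>m Jmat n e) * Hs"
    by (rule add_mult_distrib_mat[OF J(1) smult_carrier_mat[OF J(2)] assms(1)])
  also have "(t \<cdot>\<^sub>m Jmat n e) * Hs = t \<cdot>\<^sub>m (Jmat n e * Hs)"
    by (rule mult_smult_assoc_mat[OF J(2) assms(1)])
  finally have "Jmat n (x + t \<cdot>\<^sub>v e) * Hs = Jmat n x * Hs + t \<cdot>\<^sub>m (Jmat n e * Hs)" .
  then show ?thesis
    unfolding qfun_def by (rule arg_cong)
qed

lemma grad_carrier: "grad m f x \<in> carrier_vec m"
  by (simp add: grad_def)

lemma grad_qfun_index:
  assumes "n \<ge> 1" "admissible_hessian n Hs" "x \<in> carrier_vec (2*n)" "k < 2*n"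
  shows "grad (2*n) (qfun n Hs l) x $ k
    = mtrace (transpose_mat (Amat n) ^\<^sub>m l * ((Jmat n (unit_vec (2*n) k) * Hs) * (Jmat n x * Hs))) / real n"
proof -
  define P where "P = transpose_mat (Amat n) ^\<^sub>m l"
  define M where "M = Jmat n x * Hs"
  define K where "K = Jmat n (unit_vec (2*n) k) * Hs"
  have H: "Hs \<in> carrier_mat (2*n) (2*n)"
    using assms(2) unfolding admissible_hessian_def by simp
  have B: "transpose_mat (Amat n) \<in> carrier_mat (2*n) (2*n)"
    using Amat_carrier[of n] by simp
  have P: "P \<in> carrier_mat (2*n) (2*n)" and M: "M \<in> carrier_mat (2*n) (2*n)"
    and K: "K \<in> carrier_mat (2*n) (2*n)"
    unfolding P_def M_def K_def using B H Jmat_carrier by auto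
  have PM: "P * M = M * P"
    unfolding P_def using pow_mat_commute[OF B M] admissible_transpose_Amat_commute[OF assms(1,2)]
    by (simp add: M_def)
  have "((\<lambda>t. qfun n Hs l (x + t \<cdot>\<^sub>v unit_vec (2*n) k))
      has_real_derivative 1 / (2 * real n) * mtrace (P * (M * K + K * M))) (at 0)"
    unfolding qfun_line[OF H assms(3) unit_vec_carrier] P_def[symmetric] M_def[symmetric] K_def[symmetric]
    by (intro DERIV_cmult has_derivative_mtrace_square_line[OF P M K])
  then have "grad (2*n) (qfun n Hs l) x $ k = 1 / (2 * real n) * mtrace (P * (M * K + K * M))"
    unfolding grad_def using assms(4) by (simp add: DERIV_imp_deriv)
  also have "\<dots> = mtrace (P * (K * M)) / real n"
    by (simp add: mtrace_mult_anticommutator[OF P M K PM])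
  finally show ?thesis
    unfolding P_def M_def K_def .
qed

lemma grad_qfun_Suc:
  assumes "n \<ge> 1" "admissible_hessian n Hs" "x \<in> carrier_vec (2*n)"
  shows "grad (2*n) (qfun n Hs (Suc l)) x = Amat n *\<^sub>v grad (2*n) (qfun n Hs l) x"
proof (rule eq_vecI)
  fix k assume "k < dim_vec (Amat n *\<^sub>v grad (2*n) (qfun n Hs l) x)"
  then have k: "k < 2*n" by simp
  define B where "B = transpose_mat (Amat n)"
  define M where "M = Jmat n x * Hs"
  define K where "K = (\<lambda>k. Jmat n (unit_vec (2*n) k) * Hs)"
  have H: "Hs \<in> carrier_mat (2*n) (2*n)"
    using assms(2) unfolding admissible_hessian_def by simp
  have B: "B \<in> carrier_mat (2*n) (2*n)" and Bl: "B ^\<^sub>m l \<in> carrier_mat (2*n) (2*n)"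
    unfolding B_def using Amat_carrier[of n] by auto
  have J: "Jmat n (unit_vec (2*n) k) \<in> carrier_mat (2*n) (2*n)"
    by (rule Jmat_carrier)
  have M: "M \<in> carrier_mat (2*n) (2*n)" and K: "K k \<in> carrier_mat (2*n) (2*n)"
    unfolding M_def K_def using H Jmat_carrier by auto
  have "B * K k = K (cyc_next n k)"
    unfolding K_def assoc_mult_mat[OF B J H, symmetric]
    using transpose_Amat_mult_Jmat_unit_vec[OF assms(1) k] by (simp add: B_def)
  have "B ^\<^sub>m Suc l * (K k * M) = B ^\<^sub>m l * ((B * K k) * M)"
    using assoc_mult_mat[OF Bl B mult_carrier_mat[OF K M]] assoc_mult_mat[OF B K M] by simp
  also have "\<dots> = B ^\<^sub>m l * (K (cyc_next n k) * M)"
    by (simp only: \<open>B * K k = K (cyc_next n k)\<close>)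
  finally have "B ^\<^sub>m Suc l * (K k * M) = B ^\<^sub>m l * (K (cyc_next n k) * M)" .
  then show "grad (2*n) (qfun n Hs (Suc l)) x $ k = (Amat n *\<^sub>v grad (2*n) (qfun n Hs l) x) $ k"
    unfolding Amat_mult_vec_index[OF assms(1) grad_carrier k] grad_qfun_index[OF assms k]
      grad_qfun_index[OF assms cyc_next_less[OF assms(1) k]]
    by (simp only: B_def K_def M_def)
qed (simp add: grad_def)

lemma grad_qfun_eq_Amat_pow:
  assumes "n \<ge> 1" "admissible_hessian n Hs" "x \<in> carrier_vec (2*n)"
  shows "grad (2*n) (qfun n Hs l) x = Amat n ^\<^sub>m l *\<^sub>v grad (2*n) (qfun n Hs 0) x"
proof (induction l)
  case 0
  show ?case
    using grad_carrier by simp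
next
  case (Suc l)
  have A: "Amat n \<in> carrier_mat (2*n) (2*n)" by (rule Amat_carrier)
  have "grad (2*n) (qfun n Hs (Suc l)) x = (Amat n * Amat n ^\<^sub>m l) *\<^sub>v grad (2*n) (qfun n Hs 0) x"
    unfolding grad_qfun_Suc[OF assms] Suc
    by (rule assoc_mult_mat_vec[OF A pow_carrier_mat[OF A] grad_carrier, symmetric])
  also have "Amat n * Amat n ^\<^sub>m l = Amat n ^\<^sub>m Suc l"
    using pow_mat_commute[OF A A refl, of l] by simp
  finally show ?case .
qed

theorem mainTheorem16:
  fixes n :: nat and Hs :: "real mat" and x :: "real vec" and l :: nat
  assumes "n \<ge> 2"
    and "admissible_hessian n Hs"
    and "x \<in> carrier_vec (2*n)"
    and "1 \<le> l" and "l \<le> n - 1"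
  shows "grad (2*n) (qfun n Hs l) x = (Amat n ^\<^sub>m l) *\<^sub>v grad (2*n) (qfun n Hs 0) x
     \<and> grad (2*n) (qfun n Hs l) x = Amat n *\<^sub>v grad (2*n) (qfun n Hs (l - 1)) x"
proof -
  have n: "n \<ge> 1" using assms(1) by simp
  have "l = Suc (l - 1)" using assms(4) by simp
  then have "grad (2*n) (qfun n Hs l) x = Amat n *\<^sub>v grad (2*n) (qfun n Hs (l - 1)) x"
    by (metis grad_qfun_Suc[OF n assms(2,3)])
  then show ?thesis
    using grad_qfun_eq_Amat_pow[OF n assms(2,3)] by blast
qed

end
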